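(* In the Euclidean plane or space, let ${\rm O},{\rm A},{\rm B}$ be three distinct points such that ${\rm A}$ and ${\rm B}$ lie on a same ray from ${\rm O}$. For every $T>0$ there is a unique direct Keplerian arc around ${\rm O}$ going from ${\rm A}$ to ${\rm B}$ with elapsed time $T$, and this arc is rectilinear.
   Context: Units are normalized so that the Kepler problem with fixed center ${\rm O}$ is $\ddot q=-q/|q|^3$. A Keplerian arc around ${\rm O}$ from ${\rm A}$ to ${\rm B}$ is a solution restricted to a compact time interval $[t_{\rm A},t_{\rm B}]$, $t_{\rm A}<t_{\rm B}$, with $q(t_{\rm A})={\rm A}$, $q(t_{\rm B})={\rm B}$; elapsed time $t_{\rm B}-t_{\rm A}$. Rectilinear motions are extended after collision with ${\rm O}$ (bounce back along the same ray with the same energy). An arc is indirect if its convex hull contains ${\rm O}$, direct otherwise. *)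

theory Defs
  imports "HOL-Analysis.Analysis"
begin

definition kepler_classical :: "'a::euclidean_space \<Rightarrow> (real \<Rightarrow> 'a) \<Rightarrow> real \<Rightarrow> real \<Rightarrow> bool" where
  "kepler_classical Oc q tA tB \<longleftrightarrow>
     (\<exists>v. \<forall>t\<in>{tA..tB}. q t \<noteq> Oc \<and>
        (q has_vector_derivative v t) (at t within {tA..tB}) \<and>
        (v has_vector_derivative (- (1 / norm (q t - Oc) ^ 3) *\<^sub>R (q t - Oc))) (at t within {tA..tB}))"

text \<open>Rectilinear motion along the ray Oc + r u (r \<ge> 0), possibly with collisions with Oc,
  extended after each collision by bouncing back along the same ray with the same energy h.\<close>
definition kepler_rectilinear_bounce :: "'a::euclidean_space \<Rightarrow> (real \<Rightarrow> 'a) \<Rightarrow> real \<Rightarrow> real \<Rightarrow> bool" where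
  "kepler_rectilinear_bounce Oc q tA tB \<longleftrightarrow>
     (\<exists>u r rd h. norm u = 1 \<and>
        (\<forall>t\<in>{tA..tB}. r t \<ge> 0 \<and> q t = Oc + r t *\<^sub>R u) \<and>
        continuous_on {tA..tB} r \<and>
        finite {t\<in>{tA..tB}. r t = 0} \<and>
        (\<forall>t\<in>{tA..tB}. r t \<noteq> 0 \<longrightarrow>
            (r has_real_derivative rd t) (at t within {tA..tB}) \<and>
            (rd has_real_derivative (- 1 / (r t)\<^sup>2)) (at t within {tA..tB}) \<and>
            (rd t)\<^sup>2 / 2 - 1 / r t = h))"

definition kepler_arc :: "'a::euclidean_space \<Rightarrow> 'a \<Rightarrow> 'a \<Rightarrow> (real \<Rightarrow> 'a) \<Rightarrow> real \<Rightarrow> real \<Rightarrow> bool" where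
  "kepler_arc Oc A B q tA tB \<longleftrightarrow> tA < tB \<and> q tA = A \<and> q tB = B \<and>
     (kepler_classical Oc q tA tB \<or> kepler_rectilinear_bounce Oc q tA tB)"

definition direct_arc :: "'a::euclidean_space \<Rightarrow> (real \<Rightarrow> 'a) \<Rightarrow> real \<Rightarrow> real \<Rightarrow> bool" where
  "direct_arc Oc q tA tB \<longleftrightarrow> Oc \<notin> convex hull (q ` {tA..tB})"

definition rectilinear_arc :: "'a::euclidean_space \<Rightarrow> (real \<Rightarrow> 'a) \<Rightarrow> real \<Rightarrow> real \<Rightarrow> bool" where
  "rectilinear_arc Oc q tA tB \<longleftrightarrow> (\<exists>u. u \<noteq> 0 \<and> (\<forall>t\<in>{tA..tB}. \<exists>l. q t = Oc + l *\<^sub>R u))"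

end

theory Submission
  imports Defs "HOL-Real_Asymp.Real_Asymp"
begin

text \<open>
  A direct arc stays in an open half-space bounded by a hyperplane through the centre. Its
  angular momentum is conserved and, by Rolle's theorem applied to the ratio of two coordinates,
  vanishes because both endpoints lie on one ray; so every direct arc from A to B is a
  collision-free motion along that ray, governed by the radial equation r'' = -1/r^2.
  Since -1/r^2 increases with r, the difference of two solutions with the same boundary values
  is convex wherever it is positive, so the maximum principle makes the boundary value problem
  uniquely solvable. Existence comes from the explicit elliptic, parabolic and hyperbolic radial
  solutions: the flight time from a to b, as a function of the energy, is continuous, tends to 0
  at infinite energy and to infinity when the apocentre recedes to infinity, so every T > 0 is
  attained.
\<close>

section \<open>The radial Kepler equation\<close>

definition radial_kepler_solution ::
    "(real \<Rightarrow> real) \<Rightarrow> (real \<Rightarrow> real) \<Rightarrow> real \<Rightarrow> real \<Rightarrow> real \<Rightarrow> bool" where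
  "radial_kepler_solution r r' T a b \<longleftrightarrow> r 0 = a \<and> r T = b \<and>
     (\<forall>t\<in>{0..T}. r t > 0 \<and> (r has_real_derivative r' t) (at t) \<and>
        (r' has_real_derivative -1 / (r t)^2) (at t))"

lemma radial_kepler_solution_reverse:
  assumes sol: "radial_kepler_solution r r' T a b" and "T \<ge> 0"
  shows "radial_kepler_solution (\<lambda>t. r (T - t)) (\<lambda>t. - r' (T - t)) T b a"
  unfolding radial_kepler_solution_def
proof (intro conjI ballI)
  show "r (T - 0) = b" "r (T - T) = a" using sol by (simp_all add: radial_kepler_solution_def)
next
  fix t assume "t \<in> {0..T}"
  then have "T - t \<in> {0..T}" by auto
  then have r: "r (T - t) > 0" "(r has_real_derivative r' (T - t)) (at (T - t))"
    and r': "(r' has_real_derivative -1 / (r (T - t))^2) (at (T - t))"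
    using sol by (auto simp: radial_kepler_solution_def)
  show "r (T - t) > 0" by (fact r(1))
  have "((\<lambda>t. r (T - t)) has_real_derivative r' (T - t) * -1) (at t)"
    by (rule DERIV_chain2[where g="\<lambda>t. T - t", OF r(2)]) (auto intro!: derivative_eq_intros)
  then show "((\<lambda>t. r (T - t)) has_real_derivative - r' (T - t)) (at t)" by simp
  have "((\<lambda>t. r' (T - t)) has_real_derivative -1 / (r (T - t))^2 * -1) (at t)"
    by (rule DERIV_chain2[where g="\<lambda>t. T - t", OF r']) (auto intro!: derivative_eq_intros)
  from DERIV_minus[OF this]
  show "((\<lambda>t. - r' (T - t)) has_real_derivative -1 / (r (T - t))^2) (at t)" by simp
qed

lemma radial_kepler_solution_energy:
  assumes sol: "radial_kepler_solution r r' T a b" and t: "t \<in> {0..T}"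
  shows "(r' t)^2 / 2 - 1 / r t = (r' 0)^2 / 2 - 1 / a"
proof -
  let ?H = "\<lambda>s. (r' s)^2 / 2 - 1 / r s"
  have "(?H has_real_derivative 0) (at s within {0..T})" if "s \<in> {0..T}" for s
  proof -
    have "r s > 0" "(r has_real_derivative r' s) (at s)" "(r' has_real_derivative -1 / (r s)^2) (at s)"
      using sol that by (auto simp: radial_kepler_solution_def)
    then have "(?H has_real_derivative 0) (at s)"
      by (auto intro!: derivative_eq_intros simp: power2_eq_square)
    then show ?thesis by (rule has_field_derivative_at_within)
  qed
  then obtain C where "\<forall>s\<in>{0..T}. ?H s = C"
    using has_field_derivative_zero_constant[of "{0..T}" ?H] by auto
  moreover have "0 \<in> {0..T}" using t by auto
  ultimately show ?thesis using t sol by (auto simp: radial_kepler_solution_def)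
qed

section \<open>Explicit radial orbits\<close>

lemma increasing_inverse_has_derivative:
  fixes K Kd :: "real \<Rightarrow> real"
  assumes "a \<le> b"
    and K: "\<And>E. a \<le> E \<Longrightarrow> E \<le> b \<Longrightarrow> (K has_real_derivative Kd E) (at E)"
    and Kd_pos: "\<And>E. a \<le> E \<Longrightarrow> E \<le> b \<Longrightarrow> Kd E > 0"
  obtains g where "\<And>x y. a \<le> x \<Longrightarrow> x < y \<Longrightarrow> y \<le> b \<Longrightarrow> K x < K y"
    and "\<And>E. a \<le> E \<Longrightarrow> E \<le> b \<Longrightarrow> g (K E) = E"
    and "\<And>y. K a < y \<Longrightarrow> y < K b \<Longrightarrow>
           a < g y \<and> g y < b \<and> (g has_real_derivative inverse (Kd (g y))) (at y)"
proof -
  have K_less: "K x < K y" if "a \<le> x" "x < y" "y \<le> b" for x y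
  proof (rule DERIV_pos_imp_increasing[OF that(2)])
    fix z assume "x \<le> z" "z \<le> y"
    then have "a \<le> z" "z \<le> b" using that by linarith+
    then show "\<exists>d. (K has_real_derivative d) (at z) \<and> d > 0" using K Kd_pos by blast
  qed
  have inj: "inj_on K {a..b}"
    by (rule strict_mono_on_imp_inj_on) (simp add: strict_mono_on_def K_less)
  have cont: "isCont K E" if "a \<le> E" "E \<le> b" for E
    using K[OF that] by (rule DERIV_isCont)
  define g where "g = the_inv_into {a..b} K"
  have gK: "g (K E) = E" if "a \<le> E" "E \<le> b" for E
    using the_inv_into_f_f[OF inj] that by (simp add: g_def)
  have Kg: "a < g y \<and> g y < b \<and> K (g y) = y" if "K a < y" "y < K b" for y
  proof -
    have "K a \<le> y" "y \<le> K b" using that by simp_all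
    then obtain E where E: "a \<le> E" "E \<le> b" "K E = y"
      using IVT[of K a y b] cont \<open>a \<le> b\<close> by blast
    then show ?thesis using gK[OF E(1,2)] that by (auto simp: order.order_iff_strict)
  qed
  show thesis
  proof (rule that[OF K_less gK])
    fix y assume y: "K a < y" "y < K b"
    note gy = Kg[OF y]
    have "isCont g (K (g y))"
      by (rule isCont_inverse_function2[where a=a and x="g y" and b=b and g=g and f=K])
         (use gy gK cont in simp_all)
    then have "isCont g y" using gy by simp
    moreover have "a \<le> g y" "g y \<le> b" using gy by simp_all
    then have "(K has_real_derivative Kd (g y)) (at (g y))" "Kd (g y) \<noteq> 0"
      using K Kd_pos by (blast, fastforce)
    ultimately have "(g has_real_derivative inverse (Kd (g y))) (at y)"
      using y Kg by (intro DERIV_inverse_function[where f=K and a="K a" and b="K b"]) blast+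
    then show "a < g y \<and> g y < b \<and> (g has_real_derivative inverse (Kd (g y))) (at y)"
      using gy by simp
  qed
qed

lemma increasing_inverse_on_time_interval:
  fixes K Kd :: "real \<Rightarrow> real"
  assumes s: "lo < s1" "s1 < s2" "s2 < hi"
    and K: "\<And>E. lo < E \<Longrightarrow> E < hi \<Longrightarrow> (K has_real_derivative Kd E) (at E)"
    and Kd_pos: "\<And>E. lo < E \<Longrightarrow> E < hi \<Longrightarrow> Kd E > 0"
  obtains h where "h 0 = s1" "h (K s2 - K s1) = s2"
    and "\<And>t. t \<in> {0..K s2 - K s1} \<Longrightarrow>
           lo < h t \<and> h t < hi \<and> (h has_real_derivative inverse (Kd (h t))) (at t)"
proof -
  define a b where "a = (lo + s1) / 2" and "b = (s2 + hi) / 2"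
  have ab: "lo < a" "a < s1" "s2 < b" "b < hi" using s by (auto simp: a_def b_def)
  have "a \<le> b" using ab s by simp
  moreover have "(K has_real_derivative Kd E) (at E)" "Kd E > 0" if "a \<le> E" "E \<le> b" for E
    using that ab by (intro K Kd_pos; linarith)+
  ultimately obtain g where K_less: "\<And>x y. a \<le> x \<Longrightarrow> x < y \<Longrightarrow> y \<le> b \<Longrightarrow> K x < K y"
    and gK: "\<And>E. a \<le> E \<Longrightarrow> E \<le> b \<Longrightarrow> g (K E) = E"
    and g: "\<And>y. K a < y \<Longrightarrow> y < K b \<Longrightarrow>
              a < g y \<and> g y < b \<and> (g has_real_derivative inverse (Kd (g y))) (at y)"
    using increasing_inverse_has_derivative[of a b K Kd] by blast
  have Ks: "K a < K s1" "K s2 < K b" using K_less ab s by auto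
  show thesis
  proof
    show "g (K s1 + 0) = s1" "g (K s1 + (K s2 - K s1)) = s2" using gK ab s by auto
  next
    fix t assume "t \<in> {0..K s2 - K s1}"
    then have "K a < K s1 + t" "K s1 + t < K b" using Ks by auto
    note gt = g[OF this]
    have "((\<lambda>t. g (K s1 + t)) has_real_derivative inverse (Kd (g (K s1 + t))) * 1) (at t)"
      by (rule DERIV_chain2[where g="\<lambda>t. K s1 + t", OF gt[THEN conjunct2, THEN conjunct2]])
         (auto intro!: derivative_eq_intros)
    then show "lo < g (K s1 + t) \<and> g (K s1 + t) < hi \<and>
        ((\<lambda>t. g (K s1 + t)) has_real_derivative inverse (Kd (g (K s1 + t)))) (at t)"
      using gt ab by auto
  qed
qed

text \<open>A radial orbit described through a parameter E (an anomaly): time t = K E, distance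
  R E and radial velocity W E.\<close>

lemma radial_kepler_solution_of_parametrization:
  fixes R K W Kd :: "real \<Rightarrow> real"
  assumes s: "lo < s1" "s1 < s2" "s2 < hi"
    and K: "\<And>E. lo < E \<Longrightarrow> E < hi \<Longrightarrow> (K has_real_derivative Kd E) (at E)"
    and Kd_pos: "\<And>E. lo < E \<Longrightarrow> E < hi \<Longrightarrow> Kd E > 0"
    and R: "\<And>E. lo < E \<Longrightarrow> E < hi \<Longrightarrow> (R has_real_derivative W E * Kd E) (at E)"
    and R_pos: "\<And>E. lo < E \<Longrightarrow> E < hi \<Longrightarrow> R E > 0"
    and W: "\<And>E. lo < E \<Longrightarrow> E < hi \<Longrightarrow> (W has_real_derivative - Kd E / (R E)^2) (at E)"
  shows "\<exists>r r'. radial_kepler_solution r r' (K s2 - K s1) (R s1) (R s2)"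
proof -
  obtain h where h0: "h 0 = s1" "h (K s2 - K s1) = s2"
    and h: "\<And>t. t \<in> {0..K s2 - K s1} \<Longrightarrow>
              lo < h t \<and> h t < hi \<and> (h has_real_derivative inverse (Kd (h t))) (at t)"
    using increasing_inverse_on_time_interval[OF s K Kd_pos] by blast
  have "radial_kepler_solution (\<lambda>t. R (h t)) (\<lambda>t. W (h t)) (K s2 - K s1) (R s1) (R s2)"
    unfolding radial_kepler_solution_def
  proof (intro conjI ballI)
    fix t assume "t \<in> {0..K s2 - K s1}"
    note ht = h[OF this]
    have Kd: "Kd (h t) \<noteq> 0" using Kd_pos ht by fastforce
    show "R (h t) > 0" using R_pos ht by blast
    have "((\<lambda>t. R (h t)) has_real_derivative W (h t) * Kd (h t) * inverse (Kd (h t))) (at t)"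
      by (rule DERIV_chain2[OF R]) (use ht in auto)
    then show "((\<lambda>t. R (h t)) has_real_derivative W (h t)) (at t)" using Kd by (simp add: mult.assoc)
    have "((\<lambda>t. W (h t)) has_real_derivative - Kd (h t) / (R (h t))^2 * inverse (Kd (h t))) (at t)"
      by (rule DERIV_chain2[OF W]) (use ht in auto)
    then show "((\<lambda>t. W (h t)) has_real_derivative -1 / (R (h t))^2) (at t)" using Kd by simp
  qed (use h0 in auto)
  then show ?thesis by blast
qed

lemma cos_less_one:
  assumes "0 < x" "x < 2 * pi"
  shows "cos x < 1"
proof -
  have "sin (x / 2) > 0" using assms by (intro sin_gt_zero) auto
  moreover have "cos x = 1 - 2 * (sin (x / 2))^2" using cos_double_sin[of "x / 2"] by simp
  ultimately show ?thesis by simp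
qed

lemma radial_kepler_solution_elliptic:
  fixes m E1 E2 :: real
  assumes m: "m > 0" and E: "0 < E1" "E1 < E2" "E2 < 2 * pi"
  shows "\<exists>r r'. radial_kepler_solution r r'
           (m^3 * (E2 - sin E2) - m^3 * (E1 - sin E1)) (m^2 * (1 - cos E1)) (m^2 * (1 - cos E2))"
proof (rule radial_kepler_solution_of_parametrization[where lo=0 and hi="2 * pi"
      and Kd="\<lambda>E. m^3 * (1 - cos E)" and W="\<lambda>E. sin E / (m * (1 - cos E))"])
  fix E :: real assume "0 < E" "E < 2 * pi"
  then have c: "1 - cos E > 0" using cos_less_one by simp
  show "((\<lambda>E. m^3 * (E - sin E)) has_real_derivative m^3 * (1 - cos E)) (at E)"
    by (auto intro!: derivative_eq_intros)
  show "m^3 * (1 - cos E) > 0" "m^2 * (1 - cos E) > 0" using c m by simp_all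
  show "((\<lambda>E. m^2 * (1 - cos E)) has_real_derivative
      sin E / (m * (1 - cos E)) * (m^3 * (1 - cos E))) (at E)"
    using c m by (auto intro!: derivative_eq_intros simp: power2_eq_square power3_eq_cube)
  have "((\<lambda>E. sin E / (m * (1 - cos E))) has_real_derivative
      (cos E * (m * (1 - cos E)) - sin E * (m * sin E)) / (m * (1 - cos E))^2) (at E)"
    using c m by (auto intro!: derivative_eq_intros simp: power2_eq_square)
  moreover have "cos E * (m * (1 - cos E)) - sin E * (m * sin E) = - m * (1 - cos E)"
    using sin_cos_squared_add3[of E] by (simp add: algebra_simps flip: distrib_left)
  ultimately show "((\<lambda>E. sin E / (m * (1 - cos E))) has_real_derivative
      - (m^3 * (1 - cos E)) / (m^2 * (1 - cos E))^2) (at E)"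
    using c m by (simp add: power2_eq_square power3_eq_cube)
qed (use E in auto)

lemma radial_kepler_solution_hyperbolic:
  fixes m F1 F2 :: real
  assumes m: "m > 0" and F: "0 < F1" "F1 < F2"
  shows "\<exists>r r'. radial_kepler_solution r r'
           (m^3 * (sinh F2 - F2) - m^3 * (sinh F1 - F1)) (m^2 * (cosh F1 - 1)) (m^2 * (cosh F2 - 1))"
proof (rule radial_kepler_solution_of_parametrization[where lo=0 and hi="F2 + 1"
      and Kd="\<lambda>F. m^3 * (cosh F - 1)" and W="\<lambda>F. sinh F / (m * (cosh F - 1))"])
  fix F :: real assume "0 < F" "F < F2 + 1"
  then have c: "cosh F - 1 > 0" using cosh_real_strict_mono[of 0 F] by simp
  show "((\<lambda>F. m^3 * (sinh F - F)) has_real_derivative m^3 * (cosh F - 1)) (at F)"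
    by (auto intro!: derivative_eq_intros)
  show "m^3 * (cosh F - 1) > 0" "m^2 * (cosh F - 1) > 0" using c m by simp_all
  show "((\<lambda>F. m^2 * (cosh F - 1)) has_real_derivative
      sinh F / (m * (cosh F - 1)) * (m^3 * (cosh F - 1))) (at F)"
    using c m by (auto intro!: derivative_eq_intros simp: power2_eq_square power3_eq_cube)
  have "((\<lambda>F. sinh F / (m * (cosh F - 1))) has_real_derivative
      (cosh F * (m * (cosh F - 1)) - sinh F * (m * sinh F)) / (m * (cosh F - 1))^2) (at F)"
    using c m by (auto intro!: derivative_eq_intros simp: power2_eq_square)
  moreover have "cosh F * (m * (cosh F - 1)) - sinh F * (m * sinh F) = - m * (cosh F - 1)"
    using hyperbolic_pythagoras[of F] by (simp add: algebra_simps power2_eq_square flip: right_diff_distrib)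
  ultimately show "((\<lambda>F. sinh F / (m * (cosh F - 1))) has_real_derivative
      - (m^3 * (cosh F - 1)) / (m^2 * (cosh F - 1))^2) (at F)"
    using c m by (simp add: power2_eq_square power3_eq_cube)
qed (use F in auto)

lemma radial_kepler_solution_parabolic:
  fixes F1 F2 :: real
  assumes F: "0 < F1" "F1 < F2"
  shows "\<exists>r r'. radial_kepler_solution r r' (F2^3 / 6 - F1^3 / 6) (F1^2 / 2) (F2^2 / 2)"
proof (rule radial_kepler_solution_of_parametrization[where lo=0 and hi="F2 + 1"
      and K="\<lambda>F. F^3 / 6" and Kd="\<lambda>F. F^2 / 2" and R="\<lambda>F. F^2 / 2" and W="\<lambda>F. 2 / F"])
  fix F :: real assume F: "0 < F" "F < F2 + 1"
  show "((\<lambda>F. F^3 / 6) has_real_derivative F^2 / 2) (at F)"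
    by (auto intro!: derivative_eq_intros simp: power2_eq_square power3_eq_cube)
  show "F^2 / 2 > 0" "F^2 / 2 > 0" using F by simp_all
  show "((\<lambda>F. F^2 / 2) has_real_derivative 2 / F * (F^2 / 2)) (at F)"
    using F by (auto intro!: derivative_eq_intros simp: power2_eq_square)
  show "((\<lambda>F. 2 / F) has_real_derivative - (F^2 / 2) / (F^2 / 2)^2) (at F)"
    using F by (auto intro!: derivative_eq_intros simp: power2_eq_square field_simps)
qed (use F in auto)

section \<open>Flight time as a function of the energy\<close>

definition elliptic_ascent :: "real \<Rightarrow> real" where
  "elliptic_ascent E = (E - sin E) / ((1 - cos E) * sqrt (1 - cos E))"

definition hyperbolic_ascent :: "real \<Rightarrow> real" where
  "hyperbolic_ascent F = (sinh F - F) / ((cosh F - 1) * sqrt (cosh F - 1))"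

text \<open>A radial orbit of energy -e/2 reaches distance r, climbing from the collision, after time
  r^(3/2) * ascent_factor (e * r): Kepler's equation in a form that is continuous across the
  parabolic case e = 0; with y = e r, the anomalies are given by 1 - cos E = y resp. cosh F - 1 = -y.\<close>

definition ascent_factor :: "real \<Rightarrow> real" where
  "ascent_factor y = (if 0 < y then elliptic_ascent (arccos (1 - y))
     else if y = 0 then sqrt 2 / 3 else hyperbolic_ascent (arcosh (1 - y)))"

lemma elliptic_ascent_tendsto: "(elliptic_ascent \<longlongrightarrow> sqrt 2 / 3) (at_right 0)"
  unfolding elliptic_ascent_def by real_asymp (simp add: powr_half_sqrt real_sqrt_divide field_simps)

lemma hyperbolic_ascent_tendsto: "(hyperbolic_ascent \<longlongrightarrow> sqrt 2 / 3) (at_right 0)"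
  unfolding hyperbolic_ascent_def by real_asymp (simp add: powr_half_sqrt real_sqrt_divide field_simps)

lemma hyperbolic_ascent_tendsto_at_top: "(hyperbolic_ascent \<longlongrightarrow> 0) at_top"
  unfolding hyperbolic_ascent_def by real_asymp

lemma ascent_factor_elliptic:
  assumes "0 < y" "y \<le> 2"
  shows "0 < arccos (1 - y)" "arccos (1 - y) \<le> pi" "1 - cos (arccos (1 - y)) = y"
    and "arccos (1 - y) - sin (arccos (1 - y)) = y * sqrt y * ascent_factor y"
proof -
  show "0 < arccos (1 - y)" using arccos_less_arccos[of "1 - y" 1] assms by simp
  show "arccos (1 - y) \<le> pi" using arccos_bounded[of "1 - y"] assms by simp
  show c: "1 - cos (arccos (1 - y)) = y" using assms by (simp add: cos_arccos)
  show "arccos (1 - y) - sin (arccos (1 - y)) = y * sqrt y * ascent_factor y"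
    using assms c by (simp add: ascent_factor_def elliptic_ascent_def)
qed

lemma ascent_factor_hyperbolic:
  assumes "y < 0"
  shows "0 < arcosh (1 - y)" "cosh (arcosh (1 - y)) - 1 = - y"
    and "sinh (arcosh (1 - y)) - arcosh (1 - y) = - y * sqrt (- y) * ascent_factor y"
proof -
  show "0 < arcosh (1 - y)" using assms arcosh_real_gt_1_iff[of "1 - y"] by simp
  show c: "cosh (arcosh (1 - y)) - 1 = - y" using assms by (simp add: cosh_arcosh_real)
  show "sinh (arcosh (1 - y)) - arcosh (1 - y) = - y * sqrt (- y) * ascent_factor y"
    using assms c by (simp add: ascent_factor_def hyperbolic_ascent_def)
qed

lemma ascent_factor_tendsto_at_right: "(ascent_factor \<longlongrightarrow> sqrt 2 / 3) (at_right 0)"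
proof -
  have "continuous_on {0..2} (\<lambda>y::real. arccos (1 - y))"
    by (intro continuous_intros) auto
  from this[unfolded continuous_on_def, rule_format, of 0]
  have "((\<lambda>y::real. arccos (1 - y)) \<longlongrightarrow> 0) (at 0 within {0..2})"
    by simp
  then have "((\<lambda>y. arccos (1 - y)) \<longlongrightarrow> 0) (at_right 0)"
    by (simp add: at_within_Icc_at_right)
  moreover have "\<forall>\<^sub>F y in at_right 0. 0 < y \<and> y < (2::real)"
    by (simp add: eventually_at_right_field) (auto intro!: exI[of _ 1])
  then have "\<forall>\<^sub>F y in at_right 0. arccos (1 - y) > 0"
    by (rule eventually_mono) (auto intro: ascent_factor_elliptic(1))
  ultimately have "filterlim (\<lambda>y. arccos (1 - y)) (at_right 0) (at_right 0)"
    by (rule tendsto_imp_filterlim_at_right)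
  from filterlim_compose[OF elliptic_ascent_tendsto this]
  show ?thesis
    by (rule Lim_transform_eventually)
       (auto simp: ascent_factor_def eventually_at_right_field intro!: exI[of _ 1])
qed

lemma ascent_factor_tendsto_at_left: "(ascent_factor \<longlongrightarrow> sqrt 2 / 3) (at_left 0)"
proof -
  have "continuous_on {..0} (\<lambda>y::real. arcosh (1 - y))"
    by (intro continuous_intros) auto
  from this[unfolded continuous_on_def, rule_format, of 0]
  have "((\<lambda>y::real. arcosh (1 - y)) \<longlongrightarrow> 0) (at 0 within {..0})"
    by simp
  then have "((\<lambda>y::real. arcosh (1 - y)) \<longlongrightarrow> 0) (at_left 0)"
    by (rule tendsto_within_subset) auto
  moreover have "\<forall>\<^sub>F y in at_left 0. y < (0::real)"
    by (simp add: eventually_at_left_field) (auto intro!: exI[of _ "-1"])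
  then have "\<forall>\<^sub>F y in at_left 0. arcosh (1 - y) > (0::real)"
    by (rule eventually_mono) (rule ascent_factor_hyperbolic(1))
  ultimately have "filterlim (\<lambda>y::real. arcosh (1 - y)) (at_right 0) (at_left 0)"
    by (rule tendsto_imp_filterlim_at_right)
  from filterlim_compose[OF hyperbolic_ascent_tendsto this]
  show ?thesis
    by (rule Lim_transform_eventually)
       (auto simp: ascent_factor_def eventually_at_left_field intro!: exI[of _ "-1"])
qed

lemma ascent_factor_tendsto_at_bot: "(ascent_factor \<longlongrightarrow> 0) at_bot"
proof -
  have "filterlim (\<lambda>y::real. arcosh (1 - y)) at_top at_bot"
    unfolding arcosh_def by real_asymp
  from filterlim_compose[OF hyperbolic_ascent_tendsto_at_top this]
  show ?thesis
    by (rule Lim_transform_eventually)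
       (auto simp: ascent_factor_def eventually_at_bot_linorder intro!: exI[of _ "-1"])
qed

lemma isCont_ascent_factor_0: "isCont ascent_factor 0"
  using filterlim_split_at[OF ascent_factor_tendsto_at_left ascent_factor_tendsto_at_right]
  by (simp add: isCont_def ascent_factor_def)

lemma continuous_on_ascent_factor: "continuous_on {..2} ascent_factor"
proof -
  have "continuous_on {..<0} (\<lambda>y. (sinh (arcosh (1 - y)) - arcosh (1 - y)) / (- y * sqrt (- y)))"
    by (intro continuous_intros) auto
  then have "continuous_on {..<0} ascent_factor"
    by (rule continuous_on_eq) (auto simp: field_simps ascent_factor_hyperbolic(3))
  then have isCont_neg: "isCont ascent_factor y" if "y < 0" for y
    using that by (simp add: continuous_on_eq_continuous_at)
  have "continuous_on {0<..2} (\<lambda>y. (arccos (1 - y) - sin (arccos (1 - y))) / (y * sqrt y))"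
    by (intro continuous_intros) auto
  then have cont_pos: "continuous_on {0<..2} ascent_factor"
    by (rule continuous_on_eq) (auto simp: field_simps ascent_factor_elliptic(4))
  then have "continuous_on {0<..<2} ascent_factor" by (rule continuous_on_subset) auto
  then have isCont_pos: "isCont ascent_factor y" if "0 < y" "y < 2" for y
    using that by (simp add: continuous_on_eq_continuous_at)
  have "continuous_on {..1} ascent_factor"
  proof (intro continuous_at_imp_continuous_on ballI)
    fix y :: real assume "y \<in> {..1}"
    then consider "y < 0" | "y = 0" | "0 < y" "y < 2" by fastforce
    then show "isCont ascent_factor y" by cases (use isCont_neg isCont_ascent_factor_0 isCont_pos in auto)
  qed
  moreover have "continuous_on {1..2} ascent_factor" using cont_pos by (rule continuous_on_subset) auto
  ultimately have "continuous_on ({..1} \<union> {1..2}) ascent_factor"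
    by (intro continuous_on_closed_Un) auto
  moreover have "{..1} \<union> {1..2} = {..2::real}" by auto
  ultimately show ?thesis by simp
qed

text \<open>For 0 < a < b and energy -e/2 with b e \<le> 2: the flight time of the arc climbing monotonically
  from a to b, and (for e > 0) of the arc that climbs past b to the apocentre 2/e and falls back to b
  (a full period 2 pi e^(-3/2) minus two ascent times).\<close>

definition direct_time :: "real \<Rightarrow> real \<Rightarrow> real \<Rightarrow> real" where
  "direct_time a b e = b * sqrt b * ascent_factor (b * e) - a * sqrt a * ascent_factor (a * e)"

definition overshoot_time :: "real \<Rightarrow> real \<Rightarrow> real \<Rightarrow> real" where
  "overshoot_time a b e =
     2 * pi / (e * sqrt e) - b * sqrt b * ascent_factor (b * e) - a * sqrt a * ascent_factor (a * e)"

lemma three_halves_power_rescale: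
  fixes e y :: real
  assumes "e > 0" "y > 0"
  shows "(1 / sqrt e)^3 * (y * e * sqrt (y * e) * g) = y * sqrt y * g"
proof -
  have "sqrt (y * e) = sqrt y * sqrt e" by (simp add: real_sqrt_mult)
  moreover have "e = sqrt e * sqrt e" using assms by simp
  ultimately show ?thesis using assms by (simp add: power3_eq_cube field_simps)
qed

lemma radial_kepler_solution_direct_time_elliptic:
  assumes ab: "0 < a" "a < b" and e: "0 < e" "b * e \<le> 2"
  shows "\<exists>r r'. radial_kepler_solution r r' (direct_time a b e) a b"
proof -
  define m where "m = 1 / sqrt e"
  have m: "m > 0" using e by (simp add: m_def)
  have ae: "a * e < b * e" using ab e by simp
  have "a * e \<le> 2" using ae e(2) by linarith
  then have y: "0 < a * e" "0 < b * e" "a * e \<le> 2" "b * e \<le> 2"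
    using ab e by auto
  define E1 where "E1 = arccos (1 - a * e)"
  define E2 where "E2 = arccos (1 - b * e)"
  have E: "0 < E1" "E1 < E2" "E2 < 2 * pi"
    using ascent_factor_elliptic(1)[of "a * e"] ascent_factor_elliptic(2)[of "b * e"] y ae
      arccos_less_arccos[of "1 - b * e" "1 - a * e"] pi_gt_zero
    by (auto simp: E1_def E2_def)
  have radii: "m^2 * (1 - cos E1) = a" "m^2 * (1 - cos E2) = b"
    using ascent_factor_elliptic(3)[of "a * e"] ascent_factor_elliptic(3)[of "b * e"] y e
    by (auto simp: m_def E1_def E2_def power2_eq_square)
  have "m^3 * (E2 - sin E2) - m^3 * (E1 - sin E1) =
      m^3 * (b * e * sqrt (b * e) * ascent_factor (b * e)) - m^3 * (a * e * sqrt (a * e) * ascent_factor (a * e))"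
    using ascent_factor_elliptic(4)[of "a * e"] ascent_factor_elliptic(4)[of "b * e"] y
    by (simp add: E1_def E2_def right_diff_distrib)
  also have "\<dots> = direct_time a b e"
    using ab by (simp add: m_def direct_time_def three_halves_power_rescale[OF e(1)])
  finally show ?thesis using radial_kepler_solution_elliptic[OF m E] radii by metis
qed

lemma radial_kepler_solution_direct_time_parabolic:
  assumes ab: "0 < a" "a < b"
  shows "\<exists>r r'. radial_kepler_solution r r' (direct_time a b 0) a b"
proof -
  have F: "0 < sqrt (2 * a)" "sqrt (2 * a) < sqrt (2 * b)" using ab by auto
  have cube: "sqrt (2 * x)^3 / 6 = x * sqrt x * (sqrt 2 / 3)" if "x > 0" for x :: real
  proof -
    have "sqrt (2 * x)^3 = (sqrt (2 * x))^2 * sqrt (2 * x)" by (simp add: power3_eq_cube power2_eq_square)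
    also have "\<dots> = 2 * x * (sqrt 2 * sqrt x)" using that by (simp add: real_sqrt_mult power_mult_distrib)
    finally show ?thesis by simp
  qed
  have "sqrt (2 * a)^2 / 2 = a" "sqrt (2 * b)^2 / 2 = b" using ab by auto
  moreover have "sqrt (2 * b)^3 / 6 - sqrt (2 * a)^3 / 6 = direct_time a b 0"
    using cube[of a] cube[of b] ab by (simp add: direct_time_def ascent_factor_def)
  ultimately show ?thesis using radial_kepler_solution_parabolic[OF F] by metis
qed

lemma radial_kepler_solution_direct_time_hyperbolic:
  assumes ab: "0 < a" "a < b" and e: "e < 0"
  shows "\<exists>r r'. radial_kepler_solution r r' (direct_time a b e) a b"
proof -
  define z where "z = - e"
  have z: "z > 0" using e by (simp add: z_def)
  define m where "m = 1 / sqrt z"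
  have m: "m > 0" using z by (simp add: m_def)
  have y: "a * e < 0" "b * e < a * e" and yz: "- (a * e) = a * z" "- (b * e) = b * z"
    using e ab by (auto simp: z_def mult_strict_right_mono_neg mult_pos_neg)
  define F1 where "F1 = arcosh (1 - a * e)"
  define F2 where "F2 = arcosh (1 - b * e)"
  have F: "0 < F1" "F1 < F2"
    using ascent_factor_hyperbolic(1)[of "a * e"] y arcosh_real_strict_mono[of "1 - a * e" "1 - b * e"]
    by (auto simp: F1_def F2_def)
  have radii: "m^2 * (cosh F1 - 1) = a" "m^2 * (cosh F2 - 1) = b"
    using ascent_factor_hyperbolic(2)[of "a * e"] ascent_factor_hyperbolic(2)[of "b * e"] y yz z
    by (auto simp: m_def F1_def F2_def power2_eq_square)
  have "m^3 * (sinh F2 - F2) - m^3 * (sinh F1 - F1) =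
      m^3 * (b * z * sqrt (b * z) * ascent_factor (b * e)) - m^3 * (a * z * sqrt (a * z) * ascent_factor (a * e))"
    using ascent_factor_hyperbolic(3)[of "a * e"] ascent_factor_hyperbolic(3)[of "b * e"] y yz
    by (simp add: F1_def F2_def right_diff_distrib)
  also have "\<dots> = direct_time a b e"
    using ab by (simp add: m_def direct_time_def three_halves_power_rescale[OF z])
  finally show ?thesis using radial_kepler_solution_hyperbolic[OF m F] radii by metis
qed

lemma radial_kepler_solution_direct_time:
  assumes "0 < a" "a < b" "b * e \<le> 2"
  shows "\<exists>r r'. radial_kepler_solution r r' (direct_time a b e) a b"
  using radial_kepler_solution_direct_time_hyperbolic radial_kepler_solution_direct_time_parabolic
    radial_kepler_solution_direct_time_elliptic assms linorder_cases[of e 0]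
  by metis

lemma radial_kepler_solution_overshoot_time:
  assumes ab: "0 < a" "a < b" and e: "0 < e" "b * e \<le> 2"
  shows "\<exists>r r'. radial_kepler_solution r r' (overshoot_time a b e) a b"
proof -
  define m where "m = 1 / sqrt e"
  have m: "m > 0" using e by (simp add: m_def)
  have ae: "a * e < b * e" using ab e by simp
  have "a * e < 2" using ae e(2) by linarith
  then have y: "0 < a * e" "0 < b * e" "a * e < 2" "b * e \<le> 2"
    using ab e by auto
  define E1 where "E1 = arccos (1 - a * e)"
  define X where "X = arccos (1 - b * e)"
  define E2 where "E2 = 2 * pi - X"
  have "E1 < pi" using arccos_less_arccos[of "-1" "1 - a * e"] y by (simp add: E1_def)
  then have E: "0 < E1" "E1 < E2" "E2 < 2 * pi"
    using ascent_factor_elliptic(1)[of "a * e"] ascent_factor_elliptic(1,2)[of "b * e"] y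
    by (auto simp: E1_def E2_def X_def)
  have radii: "m^2 * (1 - cos E1) = a" "m^2 * (1 - cos E2) = b"
    using ascent_factor_elliptic(3)[of "a * e"] ascent_factor_elliptic(3)[of "b * e"] y e
    by (auto simp: m_def E1_def E2_def X_def power2_eq_square)
  have t1: "E1 - sin E1 = a * e * sqrt (a * e) * ascent_factor (a * e)"
    using ascent_factor_elliptic(4)[of "a * e"] y by (simp add: E1_def)
  have t2: "E2 - sin E2 = 2 * pi - b * e * sqrt (b * e) * ascent_factor (b * e)"
    using ascent_factor_elliptic(4)[of "b * e"] y by (simp add: E2_def X_def)
  have "m^3 * (E2 - sin E2) - m^3 * (E1 - sin E1) =
      m^3 * (2 * pi) - m^3 * (b * e * sqrt (b * e) * ascent_factor (b * e))
        - m^3 * (a * e * sqrt (a * e) * ascent_factor (a * e))"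
    unfolding t1 t2 by (simp add: algebra_simps)
  also have "\<dots> = overshoot_time a b e"
  proof -
    have "m^3 * (2 * pi) = 2 * pi / (e * sqrt e)" using e by (simp add: m_def power3_eq_cube)
    then show ?thesis using ab
      by (simp add: overshoot_time_def m_def three_halves_power_rescale[OF e(1)])
  qed
  finally show ?thesis using radial_kepler_solution_elliptic[OF m E] radii by metis
qed

lemma direct_time_tendsto_at_bot:
  assumes "0 < a" "0 < b"
  shows "(direct_time a b \<longlongrightarrow> 0) at_bot"
proof -
  have "((\<lambda>e. ascent_factor (c * e)) \<longlongrightarrow> 0) at_bot" if "0 < c" for c
    by (rule filterlim_compose[OF ascent_factor_tendsto_at_bot
          filterlim_tendsto_pos_mult_at_bot[OF tendsto_const that filterlim_ident]])
  from tendsto_diff[OF tendsto_mult_left[OF this[OF assms(2)]] tendsto_mult_left[OF this[OF assms(1)]]]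
  show ?thesis by (simp add: direct_time_def[abs_def])
qed

lemma overshoot_time_tendsto_at_right: "filterlim (overshoot_time a b) at_top (at_right 0)"
proof -
  have "((\<lambda>e. ascent_factor (c * e)) \<longlongrightarrow> ascent_factor 0) (at_right 0)" for c
    by (rule isCont_tendsto_compose[OF isCont_ascent_factor_0]) (auto intro!: tendsto_eq_intros)
  then have "((\<lambda>e. - b * sqrt b * ascent_factor (b * e) - a * sqrt a * ascent_factor (a * e)) \<longlongrightarrow>
      - b * sqrt b * ascent_factor 0 - a * sqrt a * ascent_factor 0) (at_right 0)"
    by (intro tendsto_intros)
  moreover have "filterlim (\<lambda>e::real. 2 * pi / (e * sqrt e)) at_top (at_right 0)"
    by real_asymp
  ultimately show ?thesis
    by (rule filterlim_tendsto_add_at_top[THEN filterlim_cong[THEN iffD1, rotated 3]])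
       (auto simp: overshoot_time_def)
qed

lemma continuous_on_ascent_factor_scaled:
  assumes "0 < a" "S \<subseteq> {..2 / a}"
  shows "continuous_on S (\<lambda>e. ascent_factor (a * e))"
proof (rule continuous_on_compose2[OF continuous_on_ascent_factor])
  show "(\<lambda>e. a * e) ` S \<subseteq> {..2}"
    using assms by (auto simp: field_simps)
qed (intro continuous_intros)

lemma continuous_on_direct_time:
  assumes "0 < a" "a < b"
  shows "continuous_on {..2 / b} (direct_time a b)"
proof -
  have "{..2 / b} \<subseteq> {..2 / a}" using assms frac_le[of 2 2 a b] by auto
  then show ?thesis unfolding direct_time_def[abs_def] using assms
    by (intro continuous_intros continuous_on_ascent_factor_scaled) auto
qed

lemma continuous_on_overshoot_time:
  assumes "0 < a" "a < b"
  shows "continuous_on {0<..2 / b} (overshoot_time a b)"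
proof -
  have "{0<..2 / b} \<subseteq> {..2 / a}" "{0<..2 / b} \<subseteq> {..2 / b}"
    using assms frac_le[of 2 2 a b] by auto
  then show ?thesis unfolding overshoot_time_def[abs_def] using assms
    by (intro continuous_intros continuous_on_ascent_factor_scaled) auto
qed

lemma overshoot_time_eq_direct_time:
  assumes "0 < b"
  shows "overshoot_time a b (2 / b) = direct_time a b (2 / b)"
proof -
  have "ascent_factor 2 = pi / (2 * sqrt 2)"
    by (simp add: ascent_factor_def elliptic_ascent_def)
  moreover have "2 * pi / (2 / b * sqrt (2 / b)) = 2 * (b * sqrt b * (pi / (2 * sqrt 2)))"
    using assms by (simp add: real_sqrt_divide field_simps)
  ultimately show ?thesis using assms by (simp add: overshoot_time_def direct_time_def)
qed

section \<open>Existence of radial solutions\<close>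

lemma radial_kepler_solution_exists_ascending:
  assumes ab: "0 < a" "a < b" and T: "T > 0"
  shows "\<exists>r r'. radial_kepler_solution r r' T a b"
proof -
  have b: "0 < b" "0 \<le> 2 / b" using ab by auto
  show ?thesis
  proof (cases "T \<le> direct_time a b (2 / b)")
    case True
    obtain N where N: "\<And>e. e \<le> N \<Longrightarrow> direct_time a b e < T"
      using order_tendstoD(2)[OF direct_time_tendsto_at_bot[OF ab(1) b(1)] T]
      unfolding eventually_at_bot_linorder by blast
    define e0 where "e0 = min N (2 / b)"
    have "e0 \<le> 2 / b" "direct_time a b e0 \<le> T" using N[of e0] by (auto simp: e0_def)
    moreover have "continuous_on {e0..2 / b} (direct_time a b)"
      using continuous_on_direct_time[OF ab] by (rule continuous_on_subset) auto
    ultimately obtain e where "e \<le> 2 / b" "direct_time a b e = T"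
      using IVT'[of "direct_time a b" e0 T "2 / b"] True by auto
    moreover have "b * e \<le> 2" using \<open>e \<le> 2 / b\<close> b by (simp add: field_simps)
    ultimately show ?thesis using radial_kepler_solution_direct_time[OF ab] by metis
  next
    case False
    obtain d where d: "d > 0" "\<And>e. 0 < e \<Longrightarrow> e < d \<Longrightarrow> T \<le> overshoot_time a b e"
      using overshoot_time_tendsto_at_right[of a b] unfolding filterlim_at_top eventually_at_right_field
      by blast
    define e1 where "e1 = min (d / 2) (2 / b)"
    have e1: "0 < e1" "e1 \<le> 2 / b" "T \<le> overshoot_time a b e1"
      using d b by (auto simp: e1_def)
    have "overshoot_time a b (2 / b) \<le> T"
      using False overshoot_time_eq_direct_time[OF b(1), of a] by linarith
    moreover have "continuous_on {e1..2 / b} (overshoot_time a b)"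
      using continuous_on_overshoot_time[OF ab] by (rule continuous_on_subset) (use e1 in auto)
    ultimately obtain e where "e1 \<le> e" "e \<le> 2 / b" "overshoot_time a b e = T"
      using IVT2'[of "overshoot_time a b" "2 / b" T e1] e1 by auto
    moreover have "b * e \<le> 2" using \<open>e \<le> 2 / b\<close> b by (simp add: field_simps)
    ultimately show ?thesis
      using radial_kepler_solution_overshoot_time[OF ab] e1(1) by (metis order_less_le_trans)
  qed
qed

lemma radial_kepler_solution_exists:
  assumes "0 < a" "0 < b" "a \<noteq> b" "T > 0"
  shows "\<exists>r r'. radial_kepler_solution r r' T a b"
proof (cases "a < b")
  case True
  then show ?thesis using radial_kepler_solution_exists_ascending assms by blast
next
  case False
  then obtain r r' where "radial_kepler_solution r r' T b a"
    using radial_kepler_solution_exists_ascending assms by (meson linorder_neqE_linordered_idom)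
  from radial_kepler_solution_reverse[OF this] assms show ?thesis by auto
qed

section \<open>Uniqueness of radial solutions\<close>

lemma nonpos_if_convex_where_positive:
  fixes d d' d'' :: "real \<Rightarrow> real"
  assumes ce: "c < e" and ends: "d c = 0" "d e = 0"
    and d: "\<And>t. t \<in> {c..e} \<Longrightarrow> (d has_real_derivative d' t) (at t within {c..e})"
    and d': "\<And>t. t \<in> {c..e} \<Longrightarrow> (d' has_real_derivative d'' t) (at t within {c..e})"
    and convex: "\<And>t. t \<in> {c..e} \<Longrightarrow> d t > 0 \<Longrightarrow> d'' t > 0"
    and t: "t \<in> {c..e}"
  shows "d t \<le> 0"
proof (rule ccontr)
  assume "\<not> d t \<le> 0"
  have "continuous_on {c..e} d"
    using d DERIV_continuous continuous_on_eq_continuous_within by blast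
  then obtain x where x: "x \<in> {c..e}" and max: "\<And>y. y \<in> {c..e} \<Longrightarrow> d y \<le> d x"
    using continuous_attains_sup[of "{c..e}" d] ce by fastforce
  have "d x > 0" using max[OF t] \<open>\<not> d t \<le> 0\<close> by linarith
  then have x_in: "c < x" "x < e" using x ends by (auto simp: less_le)
  have at_inner: "at y within {c..e} = at y" if "c < y" "y < e" for y
    using that by (rule at_within_Icc_at)
  have d'_x: "d' x = 0"
  proof (rule DERIV_local_max)
    show "(d has_real_derivative d' x) (at x)" using d[OF x] at_inner[OF x_in] by simp
    show "0 < min (x - c) (e - x)" using x_in by simp
    show "\<forall>y. \<bar>x - y\<bar> < min (x - c) (e - x) \<longrightarrow> d y \<le> d x"
      using max by (auto simp: abs_if split: if_splits)
  qed
  obtain \<delta> where \<delta>: "\<delta> > 0" "\<And>h. h > 0 \<Longrightarrow> h < \<delta> \<Longrightarrow> d' x < d' (x + h)"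
    using DERIV_pos_inc_right[where f=d' and x=x and l="d'' x"] d'[OF x] at_inner[OF x_in] convex[OF x \<open>d x > 0\<close>]
    by auto
  define h where "h = min (\<delta> / 2) ((e - x) / 2)"
  have h: "0 < h" "h < \<delta>" "x + h < e" using \<delta>(1) x_in by (auto simp: h_def min_def field_simps)
  have "\<forall>y. x \<le> y \<and> y \<le> x + h \<longrightarrow> (d has_real_derivative d' y) (at y)"
  proof (intro allI impI)
    fix y assume "x \<le> y \<and> y \<le> x + h"
    then have "c < y" "y < e" using x_in h by auto
    then show "(d has_real_derivative d' y) (at y)" using d[of y] at_inner[of y] by simp
  qed
  then obtain \<xi> where \<xi>: "x < \<xi>" "\<xi> < x + h" "d (x + h) - d x = (x + h - x) * d' \<xi>"
    using MVT2[of x "x + h" d d'] h(1) by auto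
  have "d' \<xi> > 0" using \<delta>(2)[of "\<xi> - x"] d'_x \<xi> h by auto
  then have "(x + h - x) * d' \<xi> > 0" using h(1) by simp
  then have "d (x + h) > d x" using \<xi>(3) by linarith
  moreover have "x + h \<in> {c..e}" using x_in h by auto
  ultimately show False using max by fastforce
qed

lemma radial_kepler_bvp_unique:
  fixes f g f' g' :: "real \<Rightarrow> real"
  assumes ce: "c < e" and ends: "f c = g c" "f e = g e"
    and f: "\<And>t. t \<in> {c..e} \<Longrightarrow> f t > 0 \<and> (f has_real_derivative f' t) (at t within {c..e})
              \<and> (f' has_real_derivative -1 / (f t)^2) (at t within {c..e})"
    and g: "\<And>t. t \<in> {c..e} \<Longrightarrow> g t > 0 \<and> (g has_real_derivative g' t) (at t within {c..e})
              \<and> (g' has_real_derivative -1 / (g t)^2) (at t within {c..e})"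
    and t: "t \<in> {c..e}"
  shows "f t = g t"
proof -
  have "p t - q t \<le> 0"
    if p: "\<And>t. t \<in> {c..e} \<Longrightarrow> p t > 0 \<and> (p has_real_derivative p' t) (at t within {c..e})
              \<and> (p' has_real_derivative -1 / (p t)^2) (at t within {c..e})"
    and q: "\<And>t. t \<in> {c..e} \<Longrightarrow> q t > 0 \<and> (q has_real_derivative q' t) (at t within {c..e})
              \<and> (q' has_real_derivative -1 / (q t)^2) (at t within {c..e})"
    and pq: "p c = q c" "p e = q e"
    for p q p' q' :: "real \<Rightarrow> real"
  proof (rule nonpos_if_convex_where_positive[OF ce _ _ _ _ _ t])
    fix t assume t: "t \<in> {c..e}"
    show "((\<lambda>t. p t - q t) has_real_derivative p' t - q' t) (at t within {c..e})"
      using p[OF t] q[OF t] by (intro DERIV_diff) auto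
    show "((\<lambda>t. p' t - q' t) has_real_derivative -1 / (p t)^2 - -1 / (q t)^2) (at t within {c..e})"
      using p[OF t] q[OF t] by (intro DERIV_diff) auto
    assume "p t - q t > 0"
    then have "(q t)^2 < (p t)^2" using q[OF t] by (intro power_strict_mono) auto
    then have "1 / (p t)^2 < 1 / (q t)^2" using p[OF t] q[OF t] by (intro divide_strict_left_mono) auto
    then show "-1 / (p t)^2 - -1 / (q t)^2 > 0" by simp
  qed (use pq in auto)
  from this[OF f g ends] this[OF g f ends[symmetric]] show ?thesis by simp
qed

section \<open>Direct arcs are radial\<close>

lemma inner_has_real_derivative:
  "(f has_vector_derivative f') F \<Longrightarrow> ((\<lambda>t. z \<bullet> f t) has_real_derivative z \<bullet> f') F"
  using bounded_linear.has_vector_derivative[OF bounded_linear_inner_right]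
  by (simp add: has_real_derivative_iff_has_vector_derivative)

lemma central_motion_wedge_constant:
  fixes x v :: "real \<Rightarrow> 'a::real_inner"
  assumes x: "\<And>t. t \<in> {t0..t1} \<Longrightarrow> (x has_vector_derivative v t) (at t within {t0..t1})"
    and v: "\<And>t. t \<in> {t0..t1} \<Longrightarrow> (v has_vector_derivative k t *\<^sub>R x t) (at t within {t0..t1})"
    and t: "t \<in> {t0..t1}" and s: "s \<in> {t0..t1}"
  shows "(z \<bullet> x t) * (w \<bullet> v t) - (z \<bullet> v t) * (w \<bullet> x t) =
         (z \<bullet> x s) * (w \<bullet> v s) - (z \<bullet> v s) * (w \<bullet> x s)"
proof -
  let ?L = "\<lambda>t. (z \<bullet> x t) * (w \<bullet> v t) - (z \<bullet> v t) * (w \<bullet> x t)"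
  have "(?L has_real_derivative 0) (at t within {t0..t1})" if "t \<in> {t0..t1}" for t
  proof -
    have "(?L has_real_derivative
        ((z \<bullet> x t) * (w \<bullet> (k t *\<^sub>R x t)) + (z \<bullet> v t) * (w \<bullet> v t)) -
        ((z \<bullet> v t) * (w \<bullet> v t) + (z \<bullet> (k t *\<^sub>R x t)) * (w \<bullet> x t))) (at t within {t0..t1})"
      using x[OF that] v[OF that] by (intro DERIV_diff DERIV_mult' inner_has_real_derivative)
    then show ?thesis by (simp add: algebra_simps)
  qed
  then obtain C where "\<forall>t\<in>{t0..t1}. ?L t = C"
    using has_field_derivative_zero_constant[of "{t0..t1}" ?L] by auto
  then show ?thesis using t s by simp
qed

lemma central_motion_stays_on_ray:
  fixes x v :: "real \<Rightarrow> 'a::real_inner"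
  assumes lt: "t0 < t1"
    and x: "\<And>t. t \<in> {t0..t1} \<Longrightarrow> (x has_vector_derivative v t) (at t within {t0..t1})"
    and v: "\<And>t. t \<in> {t0..t1} \<Longrightarrow> (v has_vector_derivative k t *\<^sub>R x t) (at t within {t0..t1})"
    and w: "\<And>t. t \<in> {t0..t1} \<Longrightarrow> w \<bullet> x t > 0"
    and ends: "x t1 = c *\<^sub>R x t0"
    and t: "t \<in> {t0..t1}"
  shows "x t = ((w \<bullet> x t) / (w \<bullet> x t0)) *\<^sub>R x t0"
proof -
  let ?I = "{t0..t1}"
  have t0: "t0 \<in> ?I" using lt by simp
  \<comment> \<open>L z is a component of the conserved angular momentum; \<phi> z has derivative
      -L z / (w \<bullet> x)^2 and equal values at both ends, so L z = 0 by Rolle.\<close>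
  define \<phi> where "\<phi> z s = (z \<bullet> x s) / (w \<bullet> x s)" for z s
  define L where "L z = (z \<bullet> x t0) * (w \<bullet> v t0) - (z \<bullet> v t0) * (w \<bullet> x t0)" for z
  have \<phi>': "(\<phi> z has_real_derivative - L z / (w \<bullet> x s)^2) (at s within ?I)" if s: "s \<in> ?I" for z s
  proof -
    have "(\<phi> z has_real_derivative
        ((z \<bullet> v s) * (w \<bullet> x s) - (z \<bullet> x s) * (w \<bullet> v s)) / ((w \<bullet> x s) * (w \<bullet> x s))) (at s within ?I)"
      unfolding \<phi>_def[abs_def] using w[OF s] by (intro DERIV_divide inner_has_real_derivative x s) auto
    moreover have "(z \<bullet> v s) * (w \<bullet> x s) - (z \<bullet> x s) * (w \<bullet> v s) = - L z"
      using central_motion_wedge_constant[OF x v s t0, of z w] by (simp add: L_def)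
    ultimately show ?thesis by (simp add: power2_eq_square)
  qed
  have L: "L z = 0" for z
  proof -
    have "c > 0" using w[OF t0] w[of t1] lt ends by (simp add: zero_less_mult_iff)
    then have "\<phi> z t0 = \<phi> z t1" by (simp add: \<phi>_def ends)
    moreover have "continuous_on ?I (\<phi> z)"
      using \<phi>' DERIV_continuous continuous_on_eq_continuous_within by blast
    moreover have \<phi>'_at: "(\<phi> z has_real_derivative - L z / (w \<bullet> x s)^2) (at s)"
      if "t0 < s" "s < t1" for s
      using \<phi>'[of s z] that at_within_Icc_at[OF that] by simp
    then have "\<phi> z differentiable (at s)" if "t0 < s" "s < t1" for s
      using that real_differentiable_def by blast
    ultimately obtain s where s: "t0 < s" "s < t1" "(\<phi> z has_real_derivative 0) (at s)"
      using Rolle[OF lt, of "\<phi> z"] by blast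
    then have "- L z / (w \<bullet> x s)^2 = 0" using \<phi>'_at DERIV_unique by blast
    moreover have "w \<bullet> x s \<noteq> 0" using w[of s] s by simp
    ultimately show "L z = 0" by simp
  qed
  have \<phi>_const: "\<phi> z t = \<phi> z t0" for z
    using has_field_derivative_zero_constant[of ?I "\<phi> z"] \<phi>' L t t0 by force
  define r where "r = (w \<bullet> x t) / (w \<bullet> x t0)"
  have "z \<bullet> x t = z \<bullet> (r *\<^sub>R x t0)" for z
    using \<phi>_const[of z] w[OF t] w[OF t0] by (simp add: \<phi>_def r_def field_simps)
  then have "(x t - r *\<^sub>R x t0) \<bullet> (x t - r *\<^sub>R x t0) = 0"
    unfolding inner_diff_right by simp
  then show ?thesis by (simp add: r_def)
qed

definition collision_free_radial_motion ::
    "'a::euclidean_space \<Rightarrow> 'a \<Rightarrow> (real \<Rightarrow> 'a) \<Rightarrow> real \<Rightarrow> real \<Rightarrow> bool" where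
  "collision_free_radial_motion Oc u q t0 t1 \<longleftrightarrow>
     (\<exists>\<rho> \<rho>'. \<forall>t\<in>{t0..t1}. \<rho> t > 0 \<and> q t = Oc + \<rho> t *\<^sub>R u \<and>
        (\<rho> has_real_derivative \<rho>' t) (at t within {t0..t1}) \<and>
        (\<rho>' has_real_derivative -1 / (\<rho> t)^2) (at t within {t0..t1}))"

lemma separating_direction_of_direct_path:
  fixes q :: "real \<Rightarrow> 'a::euclidean_space"
  assumes "continuous_on {t0..t1} q" "Oc \<notin> convex hull (q ` {t0..t1})"
  obtains w where "\<And>t. t \<in> {t0..t1} \<Longrightarrow> w \<bullet> (q t - Oc) > 0"
proof -
  have "compact (convex hull (q ` {t0..t1}))"
    by (intro compact_convex_hull compact_continuous_image assms(1) compact_Icc)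
  then obtain w c where wc: "w \<bullet> Oc < c" "\<And>y. y \<in> convex hull (q ` {t0..t1}) \<Longrightarrow> c < w \<bullet> y"
    using separating_hyperplane_closed_point[OF convex_convex_hull compact_imp_closed assms(2)]
    by blast
  have "w \<bullet> (q t - Oc) > 0" if "t \<in> {t0..t1}" for t
    using wc(1) wc(2)[OF hull_inc[OF imageI[OF that]]] by (simp add: inner_diff_right)
  then show thesis by (rule that)
qed

lemma kepler_classical_direct_radial:
  fixes Oc u :: "'a::euclidean_space"
  assumes cl: "kepler_classical Oc q t0 t1" and lt: "t0 < t1"
    and dir: "Oc \<notin> convex hull (q ` {t0..t1})" and u: "norm u = 1"
    and A: "q t0 = Oc + \<alpha> *\<^sub>R u" "\<alpha> > 0" and B: "q t1 = Oc + \<beta> *\<^sub>R u"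
  shows "collision_free_radial_motion Oc u q t0 t1"
proof -
  let ?I = "{t0..t1}"
  obtain v where V: "\<And>t. t \<in> ?I \<Longrightarrow> q t \<noteq> Oc \<and> (q has_vector_derivative v t) (at t within ?I) \<and>
        (v has_vector_derivative (- (1 / norm (q t - Oc) ^ 3) *\<^sub>R (q t - Oc))) (at t within ?I)"
    using cl unfolding kepler_classical_def by blast
  define x where "x t = q t - Oc" for t
  have x: "(x has_vector_derivative v t) (at t within ?I)" if "t \<in> ?I" for t
    unfolding x_def using V[OF that] by (auto intro!: derivative_eq_intros)
  have v: "(v has_vector_derivative (- 1 / norm (x t) ^ 3) *\<^sub>R x t) (at t within ?I)"
    if "t \<in> ?I" for t
    using V[OF that] by (simp add: x_def)
  have "continuous_on ?I q"
    using V has_vector_derivative_continuous continuous_on_eq_continuous_within by blast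
  then obtain w where w: "\<And>t. t \<in> ?I \<Longrightarrow> w \<bullet> x t > 0"
    using separating_direction_of_direct_path dir unfolding x_def by blast
  have x0: "x t0 = \<alpha> *\<^sub>R u" and x1: "x t1 = (\<beta> / \<alpha>) *\<^sub>R x t0"
    using A B by (auto simp: x_def)
  have on_ray: "x t = ((w \<bullet> x t) / (w \<bullet> x t0) * \<alpha>) *\<^sub>R u" if "t \<in> ?I" for t
    using central_motion_stays_on_ray[OF lt x v w x1 that] by (simp add: x0)
  define \<rho> where "\<rho> t = u \<bullet> x t" for t
  have \<rho>: "\<rho> t > 0" "x t = \<rho> t *\<^sub>R u" if t: "t \<in> ?I" for t
  proof -
    obtain c where c: "x t = c *\<^sub>R u" "c > 0"
      using on_ray[OF t] w[OF t] w[of t0] lt A(2) by fastforce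
    then have "\<rho> t = c" using u by (simp add: \<rho>_def norm_eq_1)
    then show "\<rho> t > 0" "x t = \<rho> t *\<^sub>R u" using c by simp_all
  qed
  show ?thesis
    unfolding collision_free_radial_motion_def
  proof (intro exI ballI conjI)
    fix t assume t: "t \<in> ?I"
    show "\<rho> t > 0" "q t = Oc + \<rho> t *\<^sub>R u" using \<rho>[OF t] by (auto simp: x_def algebra_simps)
    show "(\<rho> has_real_derivative u \<bullet> v t) (at t within ?I)"
      unfolding \<rho>_def by (rule inner_has_real_derivative[OF x[OF t]])
    have "u \<bullet> ((- 1 / norm (x t) ^ 3) *\<^sub>R x t) = -1 / (\<rho> t)^2"
      using \<rho>[OF t] u norm_eq_1[of u] by (simp add: power2_eq_square power3_eq_cube)
    then show "((\<lambda>t. u \<bullet> v t) has_real_derivative -1 / (\<rho> t)^2) (at t within ?I)"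
      using inner_has_real_derivative[OF v[OF t], of u] by simp
  qed
qed

lemma kepler_rectilinear_bounce_direct_radial:
  fixes Oc u :: "'a::euclidean_space"
  assumes bounce: "kepler_rectilinear_bounce Oc q t0 t1" and le: "t0 \<le> t1"
    and dir: "Oc \<notin> convex hull (q ` {t0..t1})" and u: "norm u = 1"
    and A: "q t0 = Oc + \<alpha> *\<^sub>R u" "\<alpha> > 0"
  shows "collision_free_radial_motion Oc u q t0 t1"
proof -
  obtain u' r r' h where u': "norm u' = 1"
    and R: "\<forall>t\<in>{t0..t1}. r t \<ge> 0 \<and> q t = Oc + r t *\<^sub>R u'"
    and D: "\<forall>t\<in>{t0..t1}. r t \<noteq> 0 \<longrightarrow>
            (r has_real_derivative r' t) (at t within {t0..t1}) \<and>
            (r' has_real_derivative - 1 / (r t)\<^sup>2) (at t within {t0..t1}) \<and>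
            (r' t)\<^sup>2 / 2 - 1 / r t = h"
    using bounce unfolding kepler_rectilinear_bounce_def by blast
  have r_pos: "r t > 0" if t: "t \<in> {t0..t1}" for t
  proof (rule ccontr)
    assume "\<not> r t > 0"
    then have "q t = Oc" using R t by force
    moreover have "q t \<in> convex hull (q ` {t0..t1})" using t by (intro hull_inc imageI)
    ultimately show False using dir by simp
  qed
  have t0: "t0 \<in> {t0..t1}" using le by simp
  then have eq: "r t0 *\<^sub>R u' = \<alpha> *\<^sub>R u" using R A by auto
  then have "norm (r t0 *\<^sub>R u') = norm (\<alpha> *\<^sub>R u)" by (rule arg_cong)
  then have "r t0 = \<alpha>" using u u' r_pos[OF t0] A(2) by simp
  then have "u' = u" using eq A(2) by simp
  show ?thesis
    unfolding collision_free_radial_motion_def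
  proof (intro exI ballI conjI)
    fix t assume t: "t \<in> {t0..t1}"
    show "r t > 0" using r_pos[OF t] .
    then show "q t = Oc + r t *\<^sub>R u" "(r has_real_derivative r' t) (at t within {t0..t1})"
      "(r' has_real_derivative -1 / (r t)^2) (at t within {t0..t1})"
      using R D t \<open>u' = u\<close> by auto
  qed
qed

lemma direct_kepler_arc_radial:
  fixes Oc u :: "'a::euclidean_space"
  assumes arc: "kepler_arc Oc (Oc + \<alpha> *\<^sub>R u) (Oc + \<beta> *\<^sub>R u) q t0 t1"
    and dir: "direct_arc Oc q t0 t1" and u: "norm u = 1" and "\<alpha> > 0"
  shows "collision_free_radial_motion Oc u q t0 t1"
proof -
  have "t0 < t1" and ends: "q t0 = Oc + \<alpha> *\<^sub>R u" "q t1 = Oc + \<beta> *\<^sub>R u"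
    and "kepler_classical Oc q t0 t1 \<or> kepler_rectilinear_bounce Oc q t0 t1"
    using arc by (auto simp: kepler_arc_def)
  moreover have "Oc \<notin> convex hull (q ` {t0..t1})" using dir by (simp add: direct_arc_def)
  ultimately show ?thesis
    using kepler_classical_direct_radial kepler_rectilinear_bounce_direct_radial u \<open>\<alpha> > 0\<close>
    by (meson less_imp_le)
qed

lemma collision_free_radial_motion_unique:
  fixes Oc u :: "'a::euclidean_space"
  assumes mot: "collision_free_radial_motion Oc u q t0 (t0 + T)"
    and sol: "radial_kepler_solution r r' T a b" and T: "T > 0" and u: "u \<noteq> 0"
    and ends: "q t0 = Oc + a *\<^sub>R u" "q (t0 + T) = Oc + b *\<^sub>R u"
    and s: "s \<in> {0..T}"
  shows "q (t0 + s) = Oc + r s *\<^sub>R u"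
proof -
  let ?I = "{t0..t0 + T}"
  obtain \<rho> \<rho>' where \<rho>: "\<And>t. t \<in> ?I \<Longrightarrow> \<rho> t > 0 \<and> q t = Oc + \<rho> t *\<^sub>R u \<and>
      (\<rho> has_real_derivative \<rho>' t) (at t within ?I) \<and>
      (\<rho>' has_real_derivative -1 / (\<rho> t)^2) (at t within ?I)"
    using mot unfolding collision_free_radial_motion_def by blast
  have "t0 \<in> ?I" "t0 + T \<in> ?I" using T by auto
  then have \<rho>_ends: "\<rho> t0 = a" "\<rho> (t0 + T) = b" using \<rho> ends u by force+
  have r_shift: "r (t - t0) > 0 \<and> ((\<lambda>t. r (t - t0)) has_real_derivative r' (t - t0)) (at t within ?I)
      \<and> ((\<lambda>t. r' (t - t0)) has_real_derivative -1 / (r (t - t0))^2) (at t within ?I)"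
    if "t \<in> ?I" for t
  proof -
    have "t - t0 \<in> {0..T}" using that by auto
    then have r: "r (t - t0) > 0" "(r has_real_derivative r' (t - t0)) (at (t - t0))"
      "(r' has_real_derivative -1 / (r (t - t0))^2) (at (t - t0))"
      using sol by (auto simp: radial_kepler_solution_def)
    have "((\<lambda>t. r (t - t0)) has_real_derivative r' (t - t0) * 1) (at t)"
      "((\<lambda>t. r' (t - t0)) has_real_derivative -1 / (r (t - t0))^2 * 1) (at t)"
      by (rule DERIV_chain2[where g="\<lambda>t. t - t0", OF r(2)] DERIV_chain2[where g="\<lambda>t. t - t0", OF r(3)];
          auto intro!: derivative_eq_intros)+
    then show ?thesis using r(1) by (auto intro: has_field_derivative_at_within)
  qed
  have "t0 + s \<in> ?I" using s by auto
  then have "\<rho> (t0 + s) = r (t0 + s - t0)"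
  proof (rule radial_kepler_bvp_unique[where f'=\<rho>' and g'="\<lambda>t. r' (t - t0)", rotated -1])
    show "t0 < t0 + T" using T by simp
    show "\<rho> t0 = r (t0 - t0)" "\<rho> (t0 + T) = r (t0 + T - t0)"
      using \<rho>_ends sol by (auto simp: radial_kepler_solution_def)
  qed (use \<rho> r_shift in blast)+
  then show ?thesis using \<rho> \<open>t0 + s \<in> ?I\<close> by auto
qed

lemma kepler_arc_of_radial_solution:
  fixes Oc u :: "'a::euclidean_space"
  assumes sol: "radial_kepler_solution r r' T a b" and T: "T > 0" and u: "norm u = 1"
  shows "kepler_arc Oc (Oc + a *\<^sub>R u) (Oc + b *\<^sub>R u) (\<lambda>t. Oc + r t *\<^sub>R u) 0 T"
  unfolding kepler_arc_def
proof (intro conjI disjI2)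
  show "0 < T" "Oc + r 0 *\<^sub>R u = Oc + a *\<^sub>R u" "Oc + r T *\<^sub>R u = Oc + b *\<^sub>R u"
    using T sol by (auto simp: radial_kepler_solution_def)
  have r: "r t > 0" "(r has_real_derivative r' t) (at t)" "(r' has_real_derivative -1 / (r t)^2) (at t)"
    if "t \<in> {0..T}" for t
    using sol that by (auto simp: radial_kepler_solution_def)
  show "kepler_rectilinear_bounce Oc (\<lambda>t. Oc + r t *\<^sub>R u) 0 T"
    unfolding kepler_rectilinear_bounce_def
  proof (intro exI conjI ballI impI)
    show "continuous_on {0..T} r"
      using r by (intro continuous_at_imp_continuous_on ballI) (blast intro: DERIV_isCont)
    have no_collision: "{t \<in> {0..T}. r t = 0} = {}" using r by force
    show "finite {t \<in> {0..T}. r t = 0}" unfolding no_collision by simp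
    fix t assume t: "t \<in> {0..T}"
    show "0 \<le> r t" using r(1)[OF t] by simp
    show "(r has_real_derivative r' t) (at t within {0..T})"
      "(r' has_real_derivative -1 / (r t)^2) (at t within {0..T})"
      using r[OF t] by (auto intro: has_field_derivative_at_within)
    show "(r' t)^2 / 2 - 1 / r t = (r' 0)^2 / 2 - 1 / a"
      by (rule radial_kepler_solution_energy[OF sol t])
  qed (use u in auto)
qed

lemma direct_arc_of_radial_solution:
  fixes Oc u :: "'a::euclidean_space"
  assumes sol: "radial_kepler_solution r r' T a b" and u: "u \<noteq> 0"
  shows "direct_arc Oc (\<lambda>t. Oc + r t *\<^sub>R u) 0 T"
  unfolding direct_arc_def
proof
  let ?ray = "(\<lambda>s. Oc + s *\<^sub>R u) ` {0<..}"
  have "convex ?ray"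
    using convex_translation[OF convex_linear_image[OF linear_scaleR_left convex_real_interval(3)]]
    by (simp add: image_image)
  moreover have "(\<lambda>t. Oc + r t *\<^sub>R u) ` {0..T} \<subseteq> ?ray"
    using sol by (auto simp: radial_kepler_solution_def)
  ultimately have "convex hull ((\<lambda>t. Oc + r t *\<^sub>R u) ` {0..T}) \<subseteq> ?ray"
    by (intro hull_minimal)
  moreover assume "Oc \<in> convex hull ((\<lambda>t. Oc + r t *\<^sub>R u) ` {0..T})"
  ultimately show False using u by auto
qed

lemma unit_direction_of_ray:
  fixes Oc v :: "'a::real_normed_vector"
  assumes "v \<noteq> 0" "a > 0" "b > 0" "A = Oc + a *\<^sub>R v" "B = Oc + b *\<^sub>R v"
  obtains u \<alpha> \<beta> where "norm u = 1" "\<alpha> > 0" "\<beta> > 0" "A = Oc + \<alpha> *\<^sub>R u" "B = Oc + \<beta> *\<^sub>R u"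
proof
  show "norm (v /\<^sub>R norm v) = 1" "a * norm v > 0" "b * norm v > 0" using assms by auto
  show "A = Oc + (a * norm v) *\<^sub>R (v /\<^sub>R norm v)" "B = Oc + (b * norm v) *\<^sub>R (v /\<^sub>R norm v)"
    using assms by simp_all
qed

theorem mainTheorem4:
  fixes Oc A B :: "'a::euclidean_space"
  assumes dim: "DIM('a) = 2 \<or> DIM('a) = 3"
    and distinct: "Oc \<noteq> A" "Oc \<noteq> B" "A \<noteq> B"
    and ray: "\<exists>u a b. u \<noteq> 0 \<and> a > 0 \<and> b > 0 \<and> A = Oc + a *\<^sub>R u \<and> B = Oc + b *\<^sub>R u"
    and T: "T > 0"
  shows "\<exists>q. kepler_arc Oc A B q 0 T \<and> direct_arc Oc q 0 T \<and> rectilinear_arc Oc q 0 T \<and>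
           (\<forall>q' t0. kepler_arc Oc A B q' t0 (t0 + T) \<and> direct_arc Oc q' t0 (t0 + T)
               \<longrightarrow> (\<forall>s\<in>{0..T}. q' (t0 + s) = q s))"
proof -
  obtain u \<alpha> \<beta> where u: "norm u = 1" and \<alpha>\<beta>: "\<alpha> > 0" "\<beta> > 0"
    and A: "A = Oc + \<alpha> *\<^sub>R u" and B: "B = Oc + \<beta> *\<^sub>R u"
    using ray unit_direction_of_ray by metis
  then have "u \<noteq> 0" "\<alpha> \<noteq> \<beta>" using distinct(3) by auto
  then obtain r r' where sol: "radial_kepler_solution r r' T \<alpha> \<beta>"
    using radial_kepler_solution_exists \<alpha>\<beta> T by blast
  show ?thesis
  proof (intro exI conjI allI impI)
    show "kepler_arc Oc A B (\<lambda>t. Oc + r t *\<^sub>R u) 0 T"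
      using kepler_arc_of_radial_solution[OF sol T u] by (simp add: A B)
    show "direct_arc Oc (\<lambda>t. Oc + r t *\<^sub>R u) 0 T"
      by (rule direct_arc_of_radial_solution[OF sol \<open>u \<noteq> 0\<close>])
    show "rectilinear_arc Oc (\<lambda>t. Oc + r t *\<^sub>R u) 0 T"
      unfolding rectilinear_arc_def using \<open>u \<noteq> 0\<close> by blast
    fix q' t0 assume "kepler_arc Oc A B q' t0 (t0 + T) \<and> direct_arc Oc q' t0 (t0 + T)"
    then have "collision_free_radial_motion Oc u q' t0 (t0 + T)"
      and "q' t0 = Oc + \<alpha> *\<^sub>R u" "q' (t0 + T) = Oc + \<beta> *\<^sub>R u"
      using direct_kepler_arc_radial[of Oc \<alpha> u \<beta>] u \<alpha>\<beta> by (auto simp: A B kepler_arc_def)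
    then show "\<forall>s\<in>{0..T}. q' (t0 + s) = Oc + r s *\<^sub>R u"
      using collision_free_radial_motion_unique[OF _ sol T \<open>u \<noteq> 0\<close>] by blast
  qed
qed

end
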